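(* For parameters $\mathcal{R}>0$, $M$, $Q$ with $1-\frac{2M}{r}+\frac{Q^2}{r^2}>0$ for all $r>0$ (i.e. $M<|Q|$), define time-symmetric ($K_{ij}=0$) charged thin-shell data by $h=dl^2+r(l)^2(d\theta^2+\sin^2\theta\,d\phi^2)$ with $r(l)=l$ for $l\le\mathcal{R}$ and, for $l\ge\mathcal{R}$, $r(l)$ the solution of $r'=(1-\frac{2M}{r}+\frac{Q^2}{r^2})^{1/2}$ with $r(\mathcal{R})=\mathcal{R}$; the electric field is $0$ inside and $Q/r^2$ outside. Its distributional scalar curvature is $R=16\pi\sigma\,\delta(l-\mathcal{R})+\Theta(l-\mathcal{R})\frac{2Q^2}{r^4}$ with $\sigma=\frac{1}{4\pi\mathcal{R}}\bigl(1-(1-\frac{2M}{\mathcal{R}}+\frac{Q^2}{\mathcal{R}^2})^{1/2}\bigr)$, and the dominant energy condition holds iff $\mathcal{M}:=4\pi\mathcal{R}^2\sigma\ge0$; moreover $M=\mathcal{M}+\frac{Q^2-\mathcal{M}^2}{2\mathcal{R}}$. For $n\ge1$ let $\mathcal{R}_n=\frac1n$, $Q_n=\frac2n-\frac1{n^2}$, $\mathcal{M}_n=\frac1{2n^3}$ and $M_n=\mathcal{M}_n+\frac{Q_n^2-\mathcal{M}_n^2}{2\mathcal{R}_n}$. Then each such datum is asymptotically flat, satisfies the dominant energy condition, is electrovacuum outside the ball of radius $\mathcal{R}_n$, has $M_n<Q_n$ so that its exterior region is untrapped, and satisfies $\frac{Q_n}{2\mathcal{R}_n}=1-\frac1{2n}<1$;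 in particular the inequality $2\mathcal{R}>|Q|$ is sharp: $Q_n/(2\mathcal{R}_n)\to1$, while $\mathcal{R}_n,Q_n,M_n,\mathcal{M}_n\to0$ as $n\to\infty$.
   Context: $\Theta$ is the Heaviside step function, $\delta$ the Dirac delta. For time-symmetric data the dominant energy condition is equivalent to nonnegative scalar curvature $R\ge0$ of $h$, where for this metric $R=-\frac2{r^2}(r'^2+2rr''-1)$. Null expansions $\theta^\pm=\frac2r(r'\pm K_rr)$ (here $K_r=0$); untrapped means $\theta^+\theta^->0$. $M$ is the ADM mass. *)

theory Defs
  imports "HOL-Analysis.Analysis"
begin

definition RNf :: "real \<Rightarrow> real \<Rightarrow> real \<Rightarrow> real" where
  "RNf M Q \<rho> = 1 - 2 * M / \<rho> + Q\<^sup>2 / \<rho>\<^sup>2"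

definition shell_sigma :: "real \<Rightarrow> real \<Rightarrow> real \<Rightarrow> real" where
  "shell_sigma Rs M Q = (1 - sqrt (RNf M Q Rs)) / (4 * pi * Rs)"

definition shell_mass :: "real \<Rightarrow> real \<Rightarrow> real \<Rightarrow> real" where
  "shell_mass Rs M Q = 4 * pi * Rs\<^sup>2 * shell_sigma Rs M Q"

text \<open>Scalar curvature of  dl^2 + r(l)^2 g_{S^2}  at a point where r is smooth.\<close>
definition scal :: "(real \<Rightarrow> real) \<Rightarrow> real \<Rightarrow> real" where
  "scal r l = - 2 / (r l)\<^sup>2 * ((deriv r l)\<^sup>2 + 2 * r l * deriv (deriv r) l - 1)"

text \<open>Null expansions (K_r = 0).\<close>
definition theta_plus :: "(real \<Rightarrow> real) \<Rightarrow> real \<Rightarrow> real" where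
  "theta_plus r l = 2 / r l * (deriv r l + 0 * r l)"
definition theta_minus :: "(real \<Rightarrow> real) \<Rightarrow> real \<Rightarrow> real" where
  "theta_minus r l = 2 / r l * (deriv r l - 0 * r l)"

definition shell_profile :: "real \<Rightarrow> real \<Rightarrow> real \<Rightarrow> (real \<Rightarrow> real) \<Rightarrow> bool" where
  "shell_profile Rs M Q r \<longleftrightarrow>
     (\<forall>l. 0 \<le> l \<and> l \<le> Rs \<longrightarrow> r l = l) \<and>
     (\<forall>l. Rs \<le> l \<longrightarrow> (r has_real_derivative sqrt (RNf M Q (r l))) (at l within {Rs..}))"

text \<open>Dominant energy condition for the distributional scalar curvature
  R = 16 pi sigma delta(l - Rs) + (smooth part): sigma >= 0 and the smooth part >= 0.\<close>
definition shell_DEC :: "real \<Rightarrow> real \<Rightarrow> real \<Rightarrow> (real \<Rightarrow> real) \<Rightarrow> bool" where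
  "shell_DEC Rs M Q r \<longleftrightarrow> shell_sigma Rs M Q \<ge> 0 \<and> (\<forall>l. 0 < l \<and> l \<noteq> Rs \<longrightarrow> scal r l \<ge> 0)"

definition Rn :: "nat \<Rightarrow> real" where "Rn n = 1 / real n"
definition Qn :: "nat \<Rightarrow> real" where "Qn n = 2 / real n - 1 / (real n)\<^sup>2"
definition Mcaln :: "nat \<Rightarrow> real" where "Mcaln n = 1 / (2 * (real n)^3)"
definition Mn :: "nat \<Rightarrow> real" where
  "Mn n = Mcaln n + ((Qn n)\<^sup>2 - (Mcaln n)\<^sup>2) / (2 * Rn n)"

end

theory Submission
  imports Defs "HOL-Real_Asymp.Real_Asymp"
begin

(* Put F(r) = 1 - 2M/r + Q^2/r^2.  With M = m + (Q^2 - m^2)/(2R) one has F(R) = (1 - m/R)^2,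
   so the jump of r' across the shell is m/R: the shell mass is m, its surface density is
   nonnegative for m >= 0, and |Q - R| < R - m forces 0 < M < Q.  Outside the shell |M| < |Q|
   gives F >= 1 - M^2/Q^2 > 0, so r grows at least linearly; r'' = F'(r)/2 turns the scalar
   curvature into 2Q^2/r^4, and expanding sqrt F at infinity gives r' -> 1 and
   (r' - 1) r -> -M.  For the sequence, Q_n - R_n = (n-1)/n^2 lies just below
   R_n - m_n = 1/n - 1/(2n^3). *)

lemma RNf_ge:
  fixes M Q x :: real
  assumes "Q \<noteq> 0"
  shows "1 - M\<^sup>2 / Q\<^sup>2 \<le> RNf M Q x"
proof -
  have "RNf M Q x = (Q / x - M / Q)\<^sup>2 + (1 - M\<^sup>2 / Q\<^sup>2)"
    using assms by (cases "x = 0") (simp_all add: RNf_def power2_eq_square field_simps)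
  then show ?thesis by simp
qed

lemma one_minus_square_ratio_pos:
  fixes M Q :: real
  assumes "\<bar>M\<bar> < \<bar>Q\<bar>"
  shows "0 < 1 - M\<^sup>2 / Q\<^sup>2"
proof -
  have "M\<^sup>2 < Q\<^sup>2"
    using assms abs_le_square_iff [of Q M] by linarith
  moreover have "0 < Q\<^sup>2"
    using assms by simp
  ultimately show ?thesis by simp
qed

lemma RNf_pos:
  fixes M Q x :: real
  assumes "\<bar>M\<bar> < \<bar>Q\<bar>"
  shows "0 < RNf M Q x"
  using one_minus_square_ratio_pos [OF assms] RNf_ge [of Q M x] assms by linarith

lemma RNf_has_real_derivative:
  fixes M Q x :: real
  assumes "x \<noteq> 0"
  shows "(RNf M Q has_real_derivative 2 * M / x\<^sup>2 - 2 * Q\<^sup>2 / x ^ 3) (at x)"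
  unfolding RNf_def [abs_def] using assms
  by (auto intro!: derivative_eq_intros simp: power2_eq_square power3_eq_cube field_simps)

lemma sqrt_RNf_tendsto_1: "((\<lambda>x. sqrt (RNf M Q x)) \<longlongrightarrow> 1) at_top"
  unfolding RNf_def by real_asymp

lemma sqrt_RNf_minus_1_times_tendsto: "((\<lambda>x. (sqrt (RNf M Q x) - 1) * x) \<longlongrightarrow> - M) at_top"
  unfolding RNf_def by real_asymp

definition shell_adm_mass :: "real \<Rightarrow> real \<Rightarrow> real \<Rightarrow> real" where
  "shell_adm_mass R m Q = m + (Q\<^sup>2 - m\<^sup>2) / (2 * R)"

lemma RNf_shell_adm_mass_at_radius:
  assumes "R \<noteq> 0"
  shows "RNf (shell_adm_mass R m Q) Q R = (1 - m / R)\<^sup>2"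
  using assms by (simp add: RNf_def shell_adm_mass_def power2_eq_square field_simps)

lemma sqrt_RNf_shell_adm_mass_at_radius:
  assumes "0 < R" "m \<le> R"
  shows "sqrt (RNf (shell_adm_mass R m Q) Q R) = 1 - m / R"
  using assms by (simp add: RNf_shell_adm_mass_at_radius)

lemma shell_mass_shell_adm_mass:
  assumes "0 < R" "m \<le> R"
  shows "shell_mass R (shell_adm_mass R m Q) Q = m"
  using assms
  by (simp add: shell_mass_def shell_sigma_def sqrt_RNf_shell_adm_mass_at_radius power2_eq_square)

lemma shell_sigma_shell_adm_mass_nonneg:
  assumes "0 < R" "0 \<le> m" "m \<le> R"
  shows "0 \<le> shell_sigma R (shell_adm_mass R m Q) Q"
  using assms by (simp add: shell_sigma_def sqrt_RNf_shell_adm_mass_at_radius)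

lemma shell_adm_mass_bounds:
  assumes R: "0 < R" and m: "0 \<le> m" and gap: "\<bar>Q - R\<bar> < R - m"
  shows "0 < shell_adm_mass R m Q" "shell_adm_mass R m Q < Q"
proof -
  have "m < Q" using gap by linarith
  then have "m\<^sup>2 < Q\<^sup>2" using m by (simp add: power_strict_mono)
  then show "0 < shell_adm_mass R m Q"
    using R m by (simp add: shell_adm_mass_def add_nonneg_pos)
  have "\<bar>Q - R\<bar>\<^sup>2 < (R - m)\<^sup>2"
    using gap by (intro power_strict_mono) auto
  then have "2 * R * m + Q\<^sup>2 - m\<^sup>2 < 2 * R * Q"
    by (simp add: power2_eq_square algebra_simps)
  then show "shell_adm_mass R m Q < Q"
    using R by (simp add: shell_adm_mass_def field_simps)
qed

locale charged_shell =
  fixes R M Q :: real and r :: "real \<Rightarrow> real"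
  assumes radius_pos: "0 < R"
    and charge_dominates: "\<bar>M\<bar> < \<bar>Q\<bar>"
    and profile: "shell_profile R M Q r"
begin

lemma r_interior: "0 \<le> l \<Longrightarrow> l \<le> R \<Longrightarrow> r l = l"
  using profile by (simp add: shell_profile_def)

lemma r_has_real_derivative_within:
  "R \<le> l \<Longrightarrow> (r has_real_derivative sqrt (RNf M Q (r l))) (at l within {R..})"
  using profile by (simp add: shell_profile_def)

lemma r_has_real_derivative_exterior:
  assumes "R < l"
  shows "(r has_real_derivative sqrt (RNf M Q (r l))) (at l)"
proof -
  have "(r has_real_derivative sqrt (RNf M Q (r l))) (at l within {R<..})"
    using r_has_real_derivative_within [of l] assms by (auto intro: DERIV_subset)
  then show ?thesis
    using assms at_within_open [of l "{R<..}"] by simp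
qed

lemma deriv_r_exterior: "R < l \<Longrightarrow> deriv r l = sqrt (RNf M Q (r l))"
  using r_has_real_derivative_exterior DERIV_imp_deriv by blast

lemma min_speed_pos: "0 < sqrt (1 - M\<^sup>2 / Q\<^sup>2)"
  using one_minus_square_ratio_pos [OF charge_dominates] by simp

lemma min_speed_le_sqrt_RNf: "sqrt (1 - M\<^sup>2 / Q\<^sup>2) \<le> sqrt (RNf M Q x)"
  using charge_dominates by (intro real_sqrt_le_mono RNf_ge) auto

lemma r_ge_linear:
  assumes "R < l"
  shows "R + sqrt (1 - M\<^sup>2 / Q\<^sup>2) * (l - R) \<le> r l"
proof -
  have "continuous (at x within {R..}) r" if "x \<in> {R..}" for x
    using r_has_real_derivative_within [of x] that by (auto intro: DERIV_continuous)
  then have "continuous_on {R..} r"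
    by (simp add: continuous_on_eq_continuous_within)
  then have "continuous_on {R..l} r"
    by (rule continuous_on_subset) auto
  moreover have "r differentiable at x" if "R < x" for x
    using r_has_real_derivative_exterior [OF that] real_differentiable_def by blast
  ultimately obtain z where z: "R < z" "z < l" "r l - r R = (l - R) * sqrt (RNf M Q (r z))"
    using MVT [OF assms] r_has_real_derivative_exterior DERIV_unique by metis
  have "(l - R) * sqrt (1 - M\<^sup>2 / Q\<^sup>2) \<le> (l - R) * sqrt (RNf M Q (r z))"
    using assms min_speed_le_sqrt_RNf by (intro mult_left_mono) auto
  moreover have "r R = R"
    using radius_pos by (simp add: r_interior)
  ultimately show ?thesis
    using z(3) by (simp add: algebra_simps)
qed

lemma r_pos_exterior:
  assumes "R < l"
  shows "0 < r l"
proof -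
  have "0 < sqrt (1 - M\<^sup>2 / Q\<^sup>2) * (l - R)"
    using min_speed_pos assms by simp
  then show ?thesis
    using r_ge_linear [OF assms] radius_pos by linarith
qed

lemma deriv2_r_exterior:
  assumes "R < l"
  shows "deriv (deriv r) l = M / (r l)\<^sup>2 - Q\<^sup>2 / (r l) ^ 3"
proof -
  let ?F = "RNf M Q"
  have F: "0 < ?F (r l)"
    using charge_dominates by (rule RNf_pos)
  \<comment> \<open>chain rule: the factor r' = sqrt F(r) cancels the derivative of sqrt, leaving F'(r) / 2\<close>
  have "((\<lambda>y. sqrt (?F (r y))) has_real_derivative
          inverse (sqrt (?F (r l))) / 2 * ((2 * M / (r l)\<^sup>2 - 2 * Q\<^sup>2 / (r l) ^ 3) * sqrt (?F (r l))))
          (at l)"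
    using DERIV_chain2 [OF DERIV_real_sqrt [OF F] DERIV_chain2 [OF RNf_has_real_derivative
        r_has_real_derivative_exterior [OF assms]]] r_pos_exterior [OF assms] by simp
  also have "inverse (sqrt (?F (r l))) / 2 * ((2 * M / (r l)\<^sup>2 - 2 * Q\<^sup>2 / (r l) ^ 3) * sqrt (?F (r l)))
      = M / (r l)\<^sup>2 - Q\<^sup>2 / (r l) ^ 3"
    using F by (simp add: field_simps)
  finally have "(deriv r has_real_derivative M / (r l)\<^sup>2 - Q\<^sup>2 / (r l) ^ 3) (at l)"
    by (rule has_field_derivative_transform_within_open [of _ _ _ "{R<..}"])
      (use assms deriv_r_exterior in auto)
  then show ?thesis by (rule DERIV_imp_deriv)
qed

lemma scal_exterior:
  assumes "R < l"
  shows "scal r l = 2 * (Q / (r l)\<^sup>2)\<^sup>2"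
proof -
  have "(sqrt (RNf M Q (r l)))\<^sup>2 = RNf M Q (r l)"
    using RNf_pos [OF charge_dominates] by (simp add: less_imp_le)
  then show ?thesis
    using r_pos_exterior [OF assms]
    unfolding scal_def deriv_r_exterior [OF assms] deriv2_r_exterior [OF assms]
    by (simp add: RNf_def power2_eq_square power3_eq_cube field_simps)
qed

lemma scal_interior:
  assumes "0 < l" "l < R"
  shows "scal r l = 0"
proof -
  have deriv_r: "deriv r y = 1" if "0 < y" "y < R" for y
  proof (rule DERIV_imp_deriv)
    show "(r has_real_derivative 1) (at y)"
      by (rule has_field_derivative_transform_within_open [OF DERIV_ident, of "{0<..<R}"])
        (use that r_interior in auto)
  qed
  have "deriv (deriv r) l = 0"
    by (rule DERIV_imp_deriv, rule has_field_derivative_transform_within_open [OF DERIV_const, of "{0<..<R}"])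
      (use assms deriv_r in auto)
  then show ?thesis
    unfolding scal_def deriv_r [OF assms] by simp
qed

lemma scal_nonneg: "0 < l \<Longrightarrow> l \<noteq> R \<Longrightarrow> 0 \<le> scal r l"
  using scal_interior scal_exterior by (cases "l < R") auto

lemma null_expansions_product_pos:
  assumes "R < l"
  shows "0 < theta_plus r l * theta_minus r l"
proof -
  have "0 < deriv r l" "0 < r l"
    using assms RNf_pos [OF charge_dominates] by (simp_all add: deriv_r_exterior r_pos_exterior)
  then show ?thesis
    by (simp add: theta_plus_def theta_minus_def)
qed

lemma r_tendsto_at_top: "filterlim r at_top at_top"
proof (rule filterlim_at_top_mono)
  show "filterlim (\<lambda>l. R + sqrt (1 - M\<^sup>2 / Q\<^sup>2) * (l - R)) at_top at_top"
    using min_speed_pos by real_asymp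
  show "\<forall>\<^sub>F l in at_top. R + sqrt (1 - M\<^sup>2 / Q\<^sup>2) * (l - R) \<le> r l"
    using eventually_gt_at_top [of R] by eventually_elim (rule r_ge_linear)
qed

lemma eventually_deriv_r: "\<forall>\<^sub>F l in at_top. deriv r l = sqrt (RNf M Q (r l))"
  using eventually_gt_at_top [of R] by eventually_elim (rule deriv_r_exterior)

lemma deriv_r_tendsto_1: "((\<lambda>l. deriv r l) \<longlongrightarrow> 1) at_top"
proof -
  have "((\<lambda>l. sqrt (RNf M Q (r l))) \<longlongrightarrow> 1) at_top"
    using filterlim_compose [OF sqrt_RNf_tendsto_1 r_tendsto_at_top] by simp
  then show ?thesis
    by (rule Lim_transform_eventually) (use eventually_deriv_r in \<open>auto elim: eventually_mono\<close>)
qed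

lemma deriv_r_minus_1_times_r_tendsto: "((\<lambda>l. (deriv r l - 1) * r l) \<longlongrightarrow> - M) at_top"
proof -
  have "((\<lambda>l. (sqrt (RNf M Q (r l)) - 1) * r l) \<longlongrightarrow> - M) at_top"
    using filterlim_compose [OF sqrt_RNf_minus_1_times_tendsto r_tendsto_at_top] by simp
  then show ?thesis
    by (rule Lim_transform_eventually) (use eventually_deriv_r in \<open>auto elim: eventually_mono\<close>)
qed

end

lemma Mn_eq_shell_adm_mass: "Mn n = shell_adm_mass (Rn n) (Mcaln n) (Qn n)"
  by (simp add: Mn_def shell_adm_mass_def)

lemma Mcaln_bounds:
  assumes "n \<ge> 1"
  shows "0 \<le> Mcaln n" "Mcaln n \<le> Rn n"
proof -
  have Mcaln: "Mcaln n = Rn n / (2 * (real n)\<^sup>2)"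
    by (simp add: Mcaln_def Rn_def power2_eq_square power3_eq_cube)
  have "1 \<le> (real n)\<^sup>2"
    using assms by simp
  then have "1 \<le> 2 * (real n)\<^sup>2" by simp
  moreover have "0 \<le> Rn n"
    by (simp add: Rn_def)
  ultimately have "Rn n / (2 * (real n)\<^sup>2) \<le> Rn n / 1"
    using assms by (intro divide_left_mono) auto
  then show "Mcaln n \<le> Rn n"
    by (simp add: Mcaln)
  show "0 \<le> Mcaln n"
    by (simp add: Mcaln_def)
qed

lemma Qn_Rn_gap:
  assumes "n \<ge> 1"
  shows "\<bar>Qn n - Rn n\<bar> < Rn n - Mcaln n"
proof -
  define N where "N = real n"
  have N: "1 \<le> N" using assms by (simp add: N_def)
  have "Qn n - Rn n = (N - 1) / N\<^sup>2" "Rn n - Mcaln n = (2 * N\<^sup>2 - 1) / (2 * N ^ 3)"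
    using N by (simp_all add: Qn_def Rn_def Mcaln_def N_def [symmetric] power2_eq_square
        power3_eq_cube field_simps)
  moreover have "(N - 1) / N\<^sup>2 < (2 * N\<^sup>2 - 1) / (2 * N ^ 3)"
    using N by (simp add: power2_eq_square power3_eq_cube field_simps)
  ultimately show ?thesis
    using N by simp
qed

lemma Qn_over_twice_Rn: "n \<ge> 1 \<Longrightarrow> Qn n / (2 * Rn n) = 1 - 1 / (2 * real n)"
  by (simp add: Qn_def Rn_def power2_eq_square field_simps)

theorem theorem1:
  fixes n :: nat and r :: "real \<Rightarrow> real"
  assumes n1: "n \<ge> 1"
    and prof: "shell_profile (Rn n) (Mn n) (Qn n) r"
  shows
    "(\<forall>\<rho>>0. RNf (Mn n) (Qn n) \<rho> > 0)
     \<and> shell_mass (Rn n) (Mn n) (Qn n) = Mcaln n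
     \<and> shell_DEC (Rn n) (Mn n) (Qn n) r
     \<and> (\<forall>l>Rn n. scal r l = 2 * (Qn n / (r l)\<^sup>2)\<^sup>2)
     \<and> Mn n < Qn n
     \<and> (\<forall>l>Rn n. theta_plus r l * theta_minus r l > 0)
     \<and> filterlim r at_top at_top
     \<and> ((\<lambda>l. deriv r l) \<longlongrightarrow> 1) at_top
     \<and> ((\<lambda>l. (deriv r l - 1) * r l) \<longlongrightarrow> - Mn n) at_top
     \<and> Qn n / (2 * Rn n) = 1 - 1 / (2 * real n)
     \<and> Qn n / (2 * Rn n) < 1
     \<and> (\<lambda>k. Qn k / (2 * Rn k)) \<longlonglongrightarrow> 1
     \<and> Rn \<longlonglongrightarrow> 0 \<and> Qn \<longlonglongrightarrow> 0 \<and> Mn \<longlonglongrightarrow> 0 \<and> Mcaln \<longlonglongrightarrow> 0"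
proof -
  have R: "0 < Rn n" using n1 by (simp add: Rn_def)
  note m = Mcaln_bounds [OF n1]
  note M = shell_adm_mass_bounds [OF R m(1) Qn_Rn_gap [OF n1], folded Mn_eq_shell_adm_mass]
  interpret charged_shell "Rn n" "Mn n" "Qn n" r
    using R M prof by unfold_locales auto
  have "shell_DEC (Rn n) (Mn n) (Qn n) r"
    using shell_sigma_shell_adm_mass_nonneg [OF R m] scal_nonneg
    by (simp add: shell_DEC_def Mn_eq_shell_adm_mass)
  moreover have "shell_mass (Rn n) (Mn n) (Qn n) = Mcaln n"
    using shell_mass_shell_adm_mass [OF R m(2)] by (simp add: Mn_eq_shell_adm_mass)
  moreover have "(\<lambda>k. Qn k / (2 * Rn k)) \<longlonglongrightarrow> 1" "Rn \<longlonglongrightarrow> 0" "Qn \<longlonglongrightarrow> 0" "Mcaln \<longlonglongrightarrow> 0"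
    "Mn \<longlonglongrightarrow> 0"
    unfolding Mn_def Qn_def Rn_def Mcaln_def by real_asymp+
  ultimately show ?thesis
    using M n1 RNf_pos [OF charge_dominates] scal_exterior null_expansions_product_pos
      r_tendsto_at_top deriv_r_tendsto_1 deriv_r_minus_1_times_r_tendsto Qn_over_twice_Rn [OF n1]
    by auto
qed

end
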